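(* Let $d\geq 3$ and $s_1\leq s_2\leq\cdots\leq s_{d-1}$ be positive integers. Then $$\binom{s_1+s_2+\cdots+s_{d-1}}{s_1} < 2^{s_1-1}d$$ if and only if $s_1=s_2=\cdots=s_{d-1}=1$. *)

theory Defs
  imports Main
begin

end

theory Submission
  imports Defs Complex_Main
begin

text \<open>
  If all s_i = 1 the binomial coefficient is d - 1. Otherwise put a = s_1 and
  n = s_1 + ... + s_(d-1) \<ge> (d - 1) a. For a = 1 some s_j \<ge> 2, so n choose 1 = n \<ge> d.
  For a \<ge> 2 we start from (2a choose a) \<ge> 3 * 2^(a-1); for n \<ge> 2a, Pascal's rule raises
  n choose a by n choose (a - 1) \<ge> 2^(a-1) whenever n grows by one, so
  (n choose a) \<ge> (n - 2a + 3) 2^(a-1) \<ge> d 2^(a-1).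
\<close>

lemma two_pow_le_binomial:
  fixes n k :: nat
  assumes "2 * k \<le> n"
  shows "2 ^ k \<le> n choose k"
proof (cases "k = 0")
  case False
  have "(2::real) ^ k \<le> (real n / real k) ^ k"
    using False assms by (intro power_mono) (auto simp: field_simps)
  also have "\<dots> \<le> real (n choose k)"
    using assms by (intro binomial_ge_n_over_k_pow_k) simp
  finally show ?thesis
    by (metis of_nat_le_iff of_nat_numeral of_nat_power)
qed simp

lemma three_mult_two_pow_le_central_binomial:
  fixes a :: nat
  assumes "2 \<le> a"
  shows "3 * 2 ^ (a - 1) \<le> (2 * a) choose a"
proof -
  obtain b where b: "a = b + 2"
    using assms le_Suc_ex by (metis add.commute)
  have "(2 * a) choose a = ((2 * b + 3) choose (b + 1)) + ((2 * b + 3) choose (b + 2))"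
    using b by (simp add: numeral_3_eq_3)
  also have "(2 * b + 3) choose (b + 2) = (2 * b + 3) choose (b + 1)"
    using binomial_symmetric[of "b + 2" "2 * b + 3"] by simp
  also have "(2 * b + 3) choose (b + 1) = ((2 * b + 2) choose b) + ((2 * b + 2) choose (b + 1))"
    by (simp add: numeral_2_eq_2 numeral_3_eq_3)
  finally have central: "(2 * a) choose a = 2 * (((2 * b + 2) choose b) + ((2 * b + 2) choose (b + 1)))"
    by simp
  have "2 ^ b \<le> (2 * b + 2) choose b" "2 ^ (b + 1) \<le> (2 * b + 2) choose (b + 1)"
    by (intro two_pow_le_binomial; simp)+
  then show ?thesis
    using central b by simp
qed

lemma linear_mult_two_pow_le_binomial:
  fixes a n :: nat
  assumes "2 \<le> a" "2 * a \<le> n"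
  shows "(n + 3 - 2 * a) * 2 ^ (a - 1) \<le> n choose a"
  using assms(2)
proof (induction n rule: dec_induct)
  case base
  then show ?case
    using three_mult_two_pow_le_central_binomial[OF assms(1)] by simp
next
  case (step m)
  have pascal: "Suc m choose a = (m choose (a - 1)) + (m choose a)"
    using assms(1) by (metis Suc_diff_1 binomial_Suc_Suc order_less_le_trans pos2)
  have "2 ^ (a - 1) \<le> m choose (a - 1)"
    using step.hyps by (intro two_pow_le_binomial) simp
  moreover have "Suc m + 3 - 2 * a = Suc (m + 3 - 2 * a)"
    using step.hyps(1) by linarith
  ultimately show ?case
    using pascal step.IH by simp
qed

lemma two_pow_mult_le_binomial:
  fixes a d n :: nat
  assumes "2 \<le> a" "3 \<le> d" "(d - 1) * a \<le> n"
  shows "2 ^ (a - 1) * d \<le> n choose a"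
proof -
  have "(d - 1) * a = 2 * a + (d - 3) * a"
    using assms(2) by (simp add: algebra_simps flip: add_mult_distrib)
  moreover have "d - 3 \<le> (d - 3) * a"
    using assms(1) by simp
  ultimately have "d \<le> n + 3 - 2 * a" "2 * a \<le> n"
    using assms(3) by linarith+
  then have "d * 2 ^ (a - 1) \<le> (n + 3 - 2 * a) * 2 ^ (a - 1)"
    by simp
  also have "\<dots> \<le> n choose a"
    using linear_mult_two_pow_le_binomial assms(1) \<open>2 * a \<le> n\<close> .
  finally show ?thesis
    by (simp add: mult.commute)
qed

theorem lemmaA1:
  fixes d :: nat and s :: "nat \<Rightarrow> nat"
  assumes "d \<ge> 3"
    and "\<And>i. 1 \<le> i \<Longrightarrow> i \<le> d - 1 \<Longrightarrow> s i > 0"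
    and "\<And>i j. 1 \<le> i \<Longrightarrow> i \<le> j \<Longrightarrow> j \<le> d - 1 \<Longrightarrow> s i \<le> s j"
  shows "((\<Sum>i=1..d-1. s i) choose (s 1) < 2 ^ (s 1 - 1) * d)
     \<longleftrightarrow> (\<forall>i\<in>{1..d-1}. s i = 1)"
proof
  assume "\<forall>i\<in>{1..d-1}. s i = 1"
  then have "(\<Sum>i=1..d-1. s i) = d - 1" "s 1 = 1"
    using assms(1) by simp_all
  then show "(\<Sum>i=1..d-1. s i) choose (s 1) < 2 ^ (s 1 - 1) * d"
    using assms(1) by simp
next
  define n where "n = (\<Sum>i=1..d-1. s i)"
  have "(\<Sum>i=1..d-1. s 1) \<le> n"
    unfolding n_def using assms(3) by (intro sum_mono) simp
  then have n_ge: "(d - 1) * s 1 \<le> n"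
    by simp
  assume "n choose (s 1) < 2 ^ (s 1 - 1) * d"
  show "\<forall>i\<in>{1..d-1}. s i = 1"
  proof (rule ccontr)
    assume "\<not> (\<forall>i\<in>{1..d-1}. s i = 1)"
    then obtain j where j: "j \<in> {1..d-1}" "s j \<noteq> 1"
      by blast
    have "2 ^ (s 1 - 1) * d \<le> n choose (s 1)"
    proof (cases "s 1 = 1")
      case True
      have "1 < s j"
        using j assms(2)[of j] by simp
      then have "(\<Sum>i=1..d-1. 1) < n"
        unfolding n_def using j assms(2) by (intro sum_strict_mono_ex1) (auto simp: Suc_le_eq)
      then show ?thesis
        using True assms(1) by simp
    next
      case False
      moreover have "0 < s 1"
        using assms(1,2) by simp
      ultimately have "2 \<le> s 1"
        by linarith
      then show ?thesis
        using two_pow_mult_le_binomial assms(1) n_ge by blast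
    qed
    with \<open>n choose (s 1) < 2 ^ (s 1 - 1) * d\<close> show False
      by simp
  qed
qed

end
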